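(* Assume that for every $y\in\mathcal Y$ the map $u\mapsto\ell(y,u)$ is convex and $\rho$-Lipschitz continuous for some constant $\rho\in(0,\infty)$, and that for every $y\in\mathcal Y$ the map $u\mapsto s(y,u)$ is $\gamma$-Lipschitz continuous for some constant $\gamma\in(0,\infty)$. Then for every $y\in\mathcal Y$, $$|S_{\lambda;D^y}(X_i,Y_i)-\tilde S_{\lambda;D^y}(X_i,Y_i)|\le\tau^{(0)}_{\lambda;i}\ \ (1\le i\le n),\qquad |S_{\lambda;D^y}(X_{n+1},y)-\tilde S_{\lambda;D^y}(X_{n+1},y)|\le\tau^{(0)}_{\lambda;n+1},$$ where for every $i\in\{1,\dots,n+1\}$, $\tau^{(0)}_{\lambda;i}=\sqrt{K_{i,i}}\sqrt{K_{n+1,n+1}}\,\frac{\gamma\rho}{\lambda(n+1)}$.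
   Context: Let $\mathcal X\subset\mathbb R^d$, $\mathcal Y\subset\mathbb R$, $D=\{(X_1,Y_1),\dots,(X_n,Y_n)\}$ i.i.d. with distribution $P$ on $\mathcal X\times\mathcal Y$, and $(X_{n+1},Y_{n+1})\sim P$ independent of $D$. For $y\in\mathcal Y$, $D^y=D\cup\{(X_{n+1},y)\}$. Let $\mathcal H$ be a reproducing kernel Hilbert space of functions $\mathcal X\to\mathbb R$ with kernel $\kappa_{\mathcal H}$, norm $\|\cdot\|_{\mathcal H}$, and let $K=(\kappa_{\mathcal H}(X_i,X_j))_{1\le i,j\le n+1}$ be the Gram matrix, with diagonal entries $K_{i,i}=\kappa_{\mathcal H}(X_i,X_i)$. Let $\ell:\mathcal Y\times\mathcal Y\to\mathbb R$ be a loss and $\lambda>0$. For $y\in\mathcal Y$, $\hat f_{\lambda;D^y}$ denotes the minimizer over $f\in\mathcal H$ of $\frac{1}{n+1}\sum_{(x,y')\in D^y}\ell(y',f(x))+\lambda\|f\|_{\mathcal H}^2$. Given a non-conformity function $s:\mathcal Y\times\mathcal Y\to\mathbb R_+$, the scores are $S_{\lambda;D^y}(X_i,Y_i)=s(Y_i,\hat f_{\lambda;D^y}(X_i))$ for $i\le n$ and $S_{\lambda;D^y}(X_{n+1},y)=s(y,\hat f_{\lambda;D^y}(X_{n+1}))$. Fix $z\in\mathcal Y$; the approximate scores are $\tilde S_{\lambda;D^y}(X_i,Y_i)=s(Y_i,\hat f_{\lambda;D^z}(X_i))$ for $i\le n$ and $\tilde S_{\lambda;D^y}(X_{n+1},y)=s(y,\hat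 f_{\lambda;D^z}(X_{n+1}))$. *)

theory Defs
  imports "HOL-Analysis.Analysis"
begin

text \<open>The RKHS is modelled as an abstract real Hilbert space 'h together with the
  canonical feature map Phi (x |-> kappa(x,.)) on the input space; an element f of 'h
  is the function x |-> f \<bullet> Phi x (reproducing property), and the kernel is
  kappa x x' = Phi x \<bullet> Phi x'.  Density of the span of the feature vectors on the
  input set expresses that elements of H are determined by their values there.\<close>

definition is_rkhs_feature ::
  "'x set \<Rightarrow> ('x \<Rightarrow> 'x \<Rightarrow> real) \<Rightarrow> ('x \<Rightarrow> 'h::{real_inner,complete_space}) \<Rightarrow> bool" where
  "is_rkhs_feature XS kappa Phi \<longleftrightarrow>
     (\<forall>x\<in>XS. \<forall>x'\<in>XS. kappa x x' = inner (Phi x) (Phi x')) \<and>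
     closure (span (Phi ` XS)) = UNIV"

text \<open>Regularised empirical risk on the augmented data set D^y = D \<union> {(X_{n+1}, y)};
  data points are indexed 1..n+1, labels Yv 1..Yv n, candidate label y.\<close>

definition reg_risk ::
  "(real \<Rightarrow> real \<Rightarrow> real) \<Rightarrow> real \<Rightarrow> nat \<Rightarrow> (nat \<Rightarrow> 'x) \<Rightarrow> (nat \<Rightarrow> real)
    \<Rightarrow> ('x \<Rightarrow> 'h::real_inner) \<Rightarrow> real \<Rightarrow> 'h \<Rightarrow> real" where
  "reg_risk l lam n X Yv Phi y f =
     (1 / real (n + 1)) * ((\<Sum>i=1..n. l (Yv i) (inner f (Phi (X i))))
                           + l y (inner f (Phi (X (n + 1)))))
     + lam * (norm f)\<^sup>2"

definition is_minimizer :: "('h \<Rightarrow> real) \<Rightarrow> 'h \<Rightarrow> bool" where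
  "is_minimizer J f \<longleftrightarrow> (\<forall>g. J f \<le> J g)"

end

theory Submission
  imports Defs
begin

text \<open>Adding \<open>\<lambda>\<parallel>g\<parallel>\<^sup>2\<close> to a convex objective makes it strongly convex, so it grows at
  least like \<open>\<lambda>\<parallel>g - f\<parallel>\<^sup>2\<close> away from its minimiser \<open>f\<close>.  The risks for the labels \<open>y\<close>
  and \<open>z\<close> differ only in the loss of the last point, a \<open>\<rho>/(n+1)\<close>-Lipschitz function of
  \<open>f \<bullet> \<Phi>(X(n+1))\<close>.  Evaluating both minimisers in both risks and adding, the common part
  cancels and \<open>2\<lambda>\<parallel>f\<^sub>y - f\<^sub>z\<parallel>\<^sup>2 \<le> 2\<rho>\<parallel>f\<^sub>y - f\<^sub>z\<parallel>\<parallel>\<Phi>(X(n+1))\<parallel>/(n+1)\<close>.  Each score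
  then moves by at most \<open>\<gamma>\<parallel>f\<^sub>y - f\<^sub>z\<parallel>\<parallel>\<Phi>(X i)\<parallel>\<close>, and \<open>\<parallel>\<Phi>(x)\<parallel> = \<surd>\<kappa>(x,x)\<close>.\<close>

lemma nonneg_if_nonneg_affine_near_0:
  fixes a b :: real
  assumes "\<And>t. 0 < t \<Longrightarrow> t < 1 \<Longrightarrow> 0 \<le> a + t * b"
  shows "0 \<le> a"
proof (rule tendsto_lowerbound)
  show "((\<lambda>t. a + t * b) \<longlongrightarrow> a) (at_right 0)"
    by (auto intro!: tendsto_eq_intros)
  show "\<forall>\<^sub>F t in at_right 0. 0 \<le> a + t * b"
    using assms by (auto simp: eventually_at_right_field intro!: exI[of _ 1])
qed simp

lemma convex_on_sum_fun:
  assumes "finite I" "convex S" "\<And>i. i \<in> I \<Longrightarrow> convex_on S (f i)"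
  shows "convex_on S (\<lambda>x. \<Sum>i\<in>I. f i x)"
  using assms by (induction I rule: finite_induct) (auto simp: convex_on_const)

lemma convex_on_comp_inner:
  fixes p :: "'a::real_inner"
  assumes "convex_on UNIV \<phi>"
  shows "convex_on UNIV (\<lambda>f. \<phi> (inner f p))"
proof (rule convex_onI)
  fix t :: real and f g :: 'a
  assume "0 < t" "t < 1"
  then show "\<phi> (inner ((1 - t) *\<^sub>R f + t *\<^sub>R g) p) \<le> (1 - t) * \<phi> (inner f p) + t * \<phi> (inner g p)"
    using convex_onD[OF assms, of t "inner f p" "inner g p"] by (simp add: inner_add_left)
qed simp

lemma lipschitz_comp_inner_diff_le:
  fixes h :: "real \<Rightarrow> real" and f g q :: "'a::real_inner"
  assumes "L-lipschitz_on UNIV h"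
  shows "\<bar>h (inner f q) - h (inner g q)\<bar> \<le> L * (norm (f - g) * norm q)"
proof -
  have "\<bar>h (inner f q) - h (inner g q)\<bar> \<le> L * \<bar>inner (f - g) q\<bar>"
    using lipschitz_onD[OF assms, of "inner f q" "inner g q"]
    by (simp add: dist_real_def inner_diff_left)
  also have "\<dots> \<le> L * (norm (f - g) * norm q)"
    using Cauchy_Schwarz_ineq2 lipschitz_on_nonneg[OF assms] by (rule mult_left_mono)
  finally show ?thesis .
qed

lemma minimizer_quadratic_growth:
  fixes C :: "'a::real_inner \<Rightarrow> real"
  assumes "convex_on UNIV C" and "is_minimizer (\<lambda>g. C g + lam * (norm g)\<^sup>2) f"
  shows "C f + lam * (norm f)\<^sup>2 + lam * (norm (g - f))\<^sup>2 \<le> C g + lam * (norm g)\<^sup>2"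
proof -
  define d where "d = g - f"
  have norm_shift: "(norm (f + t *\<^sub>R d))\<^sup>2 = (norm f)\<^sup>2 + 2 * t * inner f d + t\<^sup>2 * (norm d)\<^sup>2"
    for t unfolding power2_norm_eq_inner
    by (simp add: inner_add_left inner_add_right inner_commute power2_eq_square algebra_simps)
  \<comment> \<open>compare \<open>f\<close> with \<open>f + t(g - f)\<close> and let \<open>t \<rightarrow> 0\<close>\<close>
  have "0 \<le> (C g - C f + 2 * lam * inner f d) + t * (lam * (norm d)\<^sup>2)" if t: "0 < t" "t < 1" for t
  proof -
    have "C f + lam * (norm f)\<^sup>2 \<le> C (f + t *\<^sub>R d) + lam * (norm (f + t *\<^sub>R d))\<^sup>2"
      using assms(2) unfolding is_minimizer_def by blast
    moreover have "C (f + t *\<^sub>R d) \<le> (1 - t) * C f + t * C g"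
      using convex_onD[OF assms(1), of t f g] t by (simp add: d_def algebra_simps)
    ultimately have "0 \<le> t * ((C g - C f + 2 * lam * inner f d) + t * (lam * (norm d)\<^sup>2))"
      unfolding norm_shift by (simp add: algebra_simps power2_eq_square)
    then show ?thesis
      using t by (simp add: zero_le_mult_iff)
  qed
  then have first_order: "0 \<le> C g - C f + 2 * lam * inner f d"
    by (rule nonneg_if_nonneg_affine_near_0)
  have "(norm g)\<^sup>2 = (norm f)\<^sup>2 + 2 * inner f d + (norm d)\<^sup>2"
    using norm_shift[of 1] by (simp add: d_def)
  then have "lam * (norm g)\<^sup>2 = lam * (norm f)\<^sup>2 + 2 * lam * inner f d + lam * (norm d)\<^sup>2"
    by (simp add: algebra_simps)
  with first_order show ?thesis
    unfolding d_def[symmetric] by linarith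
qed

lemma regularized_minimizers_dist_le:
  fixes R :: "'a::real_inner \<Rightarrow> real" and \<phi> \<psi> :: "real \<Rightarrow> real"
  assumes "lam > 0" and "convex_on UNIV R"
    and "convex_on UNIV \<phi>" "L-lipschitz_on UNIV \<phi>"
    and "convex_on UNIV \<psi>" "L-lipschitz_on UNIV \<psi>"
    and min_f: "is_minimizer (\<lambda>g. R g + \<phi> (inner g p) + lam * (norm g)\<^sup>2) f"
    and min_f': "is_minimizer (\<lambda>g. R g + \<psi> (inner g p) + lam * (norm g)\<^sup>2) f'"
  shows "norm (f - f') \<le> L * norm p / lam"
proof -
  define d where "d = f - f'"
  have "convex_on UNIV (\<lambda>g. R g + \<phi> (inner g p))" "convex_on UNIV (\<lambda>g. R g + \<psi> (inner g p))"
    using assms by (auto intro: convex_on_comp_inner)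
  from minimizer_quadratic_growth[OF this(1) min_f, of f']
    minimizer_quadratic_growth[OF this(2) min_f', of f]
  have "2 * lam * (norm d)\<^sup>2
      \<le> (\<phi> (inner f' p) - \<phi> (inner f p)) + (\<psi> (inner f p) - \<psi> (inner f' p))"
    by (simp add: d_def norm_minus_commute algebra_simps)
  also have "\<dots> \<le> 2 * (L * (norm d * norm p))"
    using lipschitz_comp_inner_diff_le[OF assms(4), of f' p f]
      lipschitz_comp_inner_diff_le[OF assms(6), of f p f']
    by (simp add: d_def norm_minus_commute)
  finally have "lam * norm d * norm d \<le> (L * norm p) * norm d"
    by (simp add: power2_eq_square algebra_simps)
  then have "lam * norm d \<le> L * norm p"
    by (cases "norm d = 0") (use \<open>lam > 0\<close> lipschitz_on_nonneg[OF assms(4)] in auto)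
  then show ?thesis
    using \<open>lam > 0\<close> by (simp add: d_def field_simps)
qed

lemma reg_risk_minimizers_dist_le:
  fixes Phi :: "'x \<Rightarrow> 'h::real_inner"
  assumes "lam > 0" and "\<forall>i\<in>{1..n}. convex_on UNIV (l (Yv i))"
    and "convex_on UNIV (l y)" "rho-lipschitz_on UNIV (l y)"
    and "convex_on UNIV (l z)" "rho-lipschitz_on UNIV (l z)"
    and "is_minimizer (reg_risk l lam n X Yv Phi y) f"
    and "is_minimizer (reg_risk l lam n X Yv Phi z) f'"
  shows "norm (f - f') \<le> rho * norm (Phi (X (n + 1))) / (lam * real (n + 1))"
proof -
  define c where "c = 1 / real (n + 1)"
  define R where "R g = c * (\<Sum>i=1..n. l (Yv i) (inner g (Phi (X i))))" for g
  have risk: "reg_risk l lam n X Yv Phi w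
      = (\<lambda>g. R g + c * l w (inner g (Phi (X (n + 1)))) + lam * (norm g)\<^sup>2)" for w
    by (simp add: fun_eq_iff reg_risk_def R_def c_def distrib_left)
  have "c \<ge> 0"
    by (simp add: c_def)
  have "convex_on UNIV R"
    unfolding R_def using \<open>c \<ge> 0\<close> assms(2)
    by (intro convex_on_cmul convex_on_sum_fun convex_on_comp_inner) auto
  with assms \<open>c \<ge> 0\<close> have "norm (f - f') \<le> c * rho * norm (Phi (X (n + 1))) / lam"
    unfolding risk
    by (intro regularized_minimizers_dist_le) (auto intro: convex_on_cmul lipschitz_on_cmult_real_nonneg)
  then show ?thesis
    by (simp add: c_def mult.commute)
qed

lemma is_rkhs_feature_sqrt_diag:
  assumes "is_rkhs_feature XS kappa Phi" and "x \<in> XS"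
  shows "sqrt (kappa x x) = norm (Phi x)"
  using assms by (simp add: is_rkhs_feature_def norm_eq_sqrt_inner)

theorem theorem8:
  fixes XS :: "(real ^ 'd) set" and YS :: "real set"
    and n :: nat and X :: "nat \<Rightarrow> real ^ 'd" and Yv :: "nat \<Rightarrow> real"
    and kappa :: "real ^ 'd \<Rightarrow> real ^ 'd \<Rightarrow> real"
    and Phi :: "real ^ 'd \<Rightarrow> 'h::{real_inner,complete_space}"
    and l :: "real \<Rightarrow> real \<Rightarrow> real" and s :: "real \<Rightarrow> real \<Rightarrow> real"
    and lam rho gamma z :: real
    and fhat :: "real \<Rightarrow> 'h"
  assumes rkhs: "is_rkhs_feature XS kappa Phi"
    and X_in: "\<forall>i\<in>{1..n+1}. X i \<in> XS"
    and Y_in: "\<forall>i\<in>{1..n}. Yv i \<in> YS"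
    and lam_pos: "lam > 0"
    and rho_pos: "rho > 0" and gamma_pos: "gamma > 0"
    and l_convex: "\<forall>y\<in>YS. convex_on UNIV (l y)"
    and l_lip: "\<forall>y\<in>YS. rho-lipschitz_on UNIV (l y)"
    and s_nonneg: "\<forall>y\<in>YS. \<forall>u. s y u \<ge> 0"
    and s_lip: "\<forall>y\<in>YS. gamma-lipschitz_on UNIV (s y)"
    and z_in: "z \<in> YS"
    and fhat_min: "\<forall>y\<in>YS. is_minimizer (reg_risk l lam n X Yv Phi y) (fhat y)"
  shows "\<forall>y\<in>YS.
     (\<forall>i\<in>{1..n}.
        \<bar>s (Yv i) (inner (fhat y) (Phi (X i))) - s (Yv i) (inner (fhat z) (Phi (X i)))\<bar>
          \<le> sqrt (kappa (X i) (X i)) * sqrt (kappa (X (n+1)) (X (n+1)))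
             * (gamma * rho / (lam * real (n + 1)))) \<and>
     \<bar>s y (inner (fhat y) (Phi (X (n+1)))) - s y (inner (fhat z) (Phi (X (n+1))))\<bar>
          \<le> sqrt (kappa (X (n+1)) (X (n+1))) * sqrt (kappa (X (n+1)) (X (n+1)))
             * (gamma * rho / (lam * real (n + 1)))"
proof (rule ballI, rule conjI)
  fix y assume "y \<in> YS"
  let ?p = "Phi (X (n + 1))"
  have dist: "norm (fhat y - fhat z) \<le> rho * norm ?p / (lam * real (n + 1))"
    using \<open>y \<in> YS\<close> z_in Y_in l_convex l_lip fhat_min lam_pos
    by (intro reg_risk_minimizers_dist_le[where y = y and z = z and l = l and Yv = Yv and X = X
          and Phi = Phi]) auto
  have score: "\<bar>s c (inner (fhat y) q) - s c (inner (fhat z) q)\<bar>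
      \<le> norm q * norm ?p * (gamma * rho / (lam * real (n + 1)))" if "c \<in> YS" for c q
  proof -
    have "\<bar>s c (inner (fhat y) q) - s c (inner (fhat z) q)\<bar>
        \<le> gamma * (norm (fhat y - fhat z) * norm q)"
      using s_lip that by (intro lipschitz_comp_inner_diff_le) auto
    also have "\<dots> \<le> gamma * (rho * norm ?p / (lam * real (n + 1)) * norm q)"
      using dist gamma_pos by (intro mult_left_mono mult_right_mono) auto
    finally show ?thesis
      by (simp add: field_simps)
  qed
  have sqrt_kappa: "sqrt (kappa (X i) (X i)) = norm (Phi (X i))" if "i \<in> {1..n+1}" for i
    using rkhs X_in that by (intro is_rkhs_feature_sqrt_diag) auto
  show "\<bar>s y (inner (fhat y) ?p) - s y (inner (fhat z) ?p)\<bar>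
      \<le> sqrt (kappa (X (n+1)) (X (n+1))) * sqrt (kappa (X (n+1)) (X (n+1)))
         * (gamma * rho / (lam * real (n + 1)))"
    using score[OF \<open>y \<in> YS\<close>] sqrt_kappa[of "n + 1"] by simp
  show "\<forall>i\<in>{1..n}.
      \<bar>s (Yv i) (inner (fhat y) (Phi (X i))) - s (Yv i) (inner (fhat z) (Phi (X i)))\<bar>
        \<le> sqrt (kappa (X i) (X i)) * sqrt (kappa (X (n+1)) (X (n+1)))
           * (gamma * rho / (lam * real (n + 1)))"
    using score Y_in sqrt_kappa by simp
qed

end
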